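(* Let $G$ be a monomer graph, $G^p$ its polymer graph and $G^{*}$ its induced star-linking graph, all with the same initial node features (node $v^p_i$ of $G^p$ having the feature of $v_{i\bmod n}$). Consider a network composed of message passing layers and nodewise transformations, ending with a mean pooling. Then the output of the network on $G^p$ equals its output on $G^{*}$.
   Context: A monomer graph is $G=(V,E,\mathbf{X})$ with atoms $V=\{v_0,\dots,v_{n-1}\}$, bonds $E$, features $\mathbf{x}_i$ of $v_i$, and boundary atoms $v_0,v_{n-1}$. The polymer graph $G^p$ has nodes $v^p_i$, $i\in\mathbb{Z}$, with $v^p_i$ carrying the features of $v_{i\bmod n}$; its edges are $(v^p_{kn+a},v^p_{kn+b})$ for every $k\in\mathbb{Z}$ and every bond $(v_a,v_b)\in E$, plus $(v^p_{kn-1},v^p_{kn})$ for every $k\in\mathbb{Z}$. The induced star-linking graph $G^*$ has node set $V$, edge set $E\cup\{(v_0,v_{n-1})\}$ and the same features. A message passing layer updates all node features simultaneously by $\mathbf{x}_v\gets\mathrm{UPDATE}(\mathbf{x}_v,\mathrm{AGG}(\{\mathbf{x}_u\}_{u\in\mathcal{N}(v)}))$ with fixed functions UPDATE, AGG ($\mathcal{N}(v)$ the neighbors of $v$). A nodewise transformation applies a fixed function to each node feature independently. The layers are applied identically on both graphs. Node features on $G^p$ remain $n$-periodic in the index, and mean pooling on $G^p$ means the average of the node features over one period $v^p_0,\dots,v^p_{n-1}$; on $G^*$ it is the average over all $n$ nodes. *)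

theory Defs
  imports "HOL-Analysis.Analysis" "HOL-Library.Multiset"
begin

text \<open>A monomer graph has atoms 0..n-1 (boundary atoms 0 and n-1), a finite set E of
  bonds (pairs of atom indices, each read as an undirected bond) and features X i.\<close>

definition polymer_edges :: "nat \<Rightarrow> (nat \<times> nat) set \<Rightarrow> (int \<times> int) set" where
  "polymer_edges n E =
     {(k * int n + int a, k * int n + int b) | k a b. (a, b) \<in> E}
     \<union> {(k * int n - 1, k * int n) | k. True}"

text \<open>Neighbor multiset of a node in a graph given by a set of (undirected) edges:
  each incident edge contributes its other endpoint (a self loop contributes twice).\<close>
definition nbrs_set :: "('v \<times> 'v) set \<Rightarrow> 'v \<Rightarrow> 'v multiset" where
  "nbrs_set Ed v =
     image_mset snd (mset_set {e \<in> Ed. fst e = v}) + image_mset fst (mset_set {e \<in> Ed. snd e = v})"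

text \<open>Induced star-linking graph: edges E plus the linking edge (v_0, v_{n-1}),
  kept as a multiset (the linking bond is added as a new bond).\<close>
definition star_edges :: "nat \<Rightarrow> (nat \<times> nat) set \<Rightarrow> (nat \<times> nat) multiset" where
  "star_edges n E = mset_set E + {#(0, n - 1)#}"

definition nbrs_mset :: "('v \<times> 'v) multiset \<Rightarrow> 'v \<Rightarrow> 'v multiset" where
  "nbrs_mset Ed v =
     image_mset snd (filter_mset (\<lambda>e. fst e = v) Ed) + image_mset fst (filter_mset (\<lambda>e. snd e = v) Ed)"

text \<open>Layers: a message passing layer (UPDATE, AGG) or a nodewise transformation.\<close>
datatype ('f, 'a) layer =
    MP "'f \<Rightarrow> 'a \<Rightarrow> 'f" "'f multiset \<Rightarrow> 'a"
  | NW "'f \<Rightarrow> 'f"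

fun apply_layer :: "('v \<Rightarrow> 'v multiset) \<Rightarrow> ('f, 'a) layer \<Rightarrow> ('v \<Rightarrow> 'f) \<Rightarrow> ('v \<Rightarrow> 'f)" where
  "apply_layer N (MP upd agg) X = (\<lambda>v. upd (X v) (agg (image_mset X (N v))))"
| "apply_layer N (NW f) X = (\<lambda>v. f (X v))"

fun run_layers :: "('v \<Rightarrow> 'v multiset) \<Rightarrow> ('f, 'a) layer list \<Rightarrow> ('v \<Rightarrow> 'f) \<Rightarrow> ('v \<Rightarrow> 'f)" where
  "run_layers N [] X = X"
| "run_layers N (l # ls) X = run_layers N ls (apply_layer N l X)"

definition polymer_output ::
  "nat \<Rightarrow> (nat \<times> nat) set \<Rightarrow> (nat \<Rightarrow> 'f::real_vector) \<Rightarrow> ('f, 'a) layer list \<Rightarrow> 'f" where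
  "polymer_output n E X ls =
     (let Y = run_layers (nbrs_set (polymer_edges n E)) ls (\<lambda>i. X (nat (i mod int n)))
      in (1 / real n) *\<^sub>R (\<Sum>i<n. Y (int i)))"

definition star_output ::
  "nat \<Rightarrow> (nat \<times> nat) set \<Rightarrow> (nat \<Rightarrow> 'f::real_vector) \<Rightarrow> ('f, 'a) layer list \<Rightarrow> 'f" where
  "star_output n E X ls =
     (let Y = run_layers (nbrs_mset (star_edges n E)) ls X
      in (1 / real n) *\<^sub>R (\<Sum>i<n. Y i))"

end

theory Submission
  imports Defs
begin

text \<open>The residue map \<open>i \<mapsto> i mod n\<close> from the polymer graph to the star-linking graph
  is a covering map: it sends the neighbour multiset of every polymer node onto the neighbour
  multiset of its image, the bonds between consecutive monomers landing on the linking edge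
  between atoms \<open>0\<close> and \<open>n - 1\<close>. Message passing and nodewise layers commute with pulling features back
  along a covering map, so at every layer the polymer features are the periodic pullback of the
  star features, and the mean over one period equals the mean over the star graph.\<close>

lemma nbrs_set_conv_Image:
  "nbrs_set Ed v = mset_set (Ed `` {v}) + mset_set (Ed\<inverse> `` {v})"
proof -
  have "image_mset snd (mset_set {e \<in> Ed. fst e = v}) = mset_set (Ed `` {v})"
    by (subst image_mset_mset_set)
      (auto simp: inj_on_def image_iff intro!: arg_cong[where f = mset_set])
  moreover have "image_mset fst (mset_set {e \<in> Ed. snd e = v}) = mset_set (Ed\<inverse> `` {v})"
    by (subst image_mset_mset_set)
      (auto simp: inj_on_def image_iff intro!: arg_cong[where f = mset_set])
  ultimately show ?thesis
    unfolding nbrs_set_def by simp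
qed

lemma nbrs_mset_add: "nbrs_mset (A + B) v = nbrs_mset A v + nbrs_mset B v"
  by (simp add: nbrs_mset_def)

lemma nbrs_mset_mset_set: "finite Ed \<Longrightarrow> nbrs_mset (mset_set Ed) = nbrs_set Ed"
  by (simp add: nbrs_mset_def nbrs_set_def fun_eq_iff)

lemma nbrs_mset_single:
  "nbrs_mset {#(a, b)#} v = (if a = v then {#b#} else {#}) + (if b = v then {#a#} else {#})"
  by (simp add: nbrs_mset_def)

lemma apply_layer_covering:
  assumes "\<And>v. image_mset p (N v) = N' (p v)"
  shows "apply_layer N l (X \<circ> p) = apply_layer N' l X \<circ> p"
  by (cases l) (simp_all add: fun_eq_iff flip: assms multiset.map_comp)

lemma run_layers_covering:
  assumes "\<And>v. image_mset p (N v) = N' (p v)"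
  shows "run_layers N ls (X \<circ> p) = run_layers N' ls X \<circ> p"
  by (induction ls arbitrary: X) (simp_all add: apply_layer_covering[of p N N', OF assms])

definition monomer_atom :: "nat \<Rightarrow> int \<Rightarrow> nat" where
  "monomer_atom n i = nat (i mod int n)"

lemma monomer_atom_of_nat: "j < n \<Longrightarrow> monomer_atom n (int j) = j"
  by (simp add: monomer_atom_def zmod_int)

lemma div_mult_add_monomer_atom: "0 < n \<Longrightarrow> i div int n * int n + int (monomer_atom n i) = i"
  by (simp add: monomer_atom_def)

lemma monomer_atom_block: "b < n \<Longrightarrow> monomer_atom n (k * int n + int b) = b"
  by (simp add: monomer_atom_def)

lemma mem_polymer_edges_iff:
  assumes "0 < n" and "E \<subseteq> {..<n} \<times> {..<n}"
  shows "(x, y) \<in> polymer_edges n E \<longleftrightarrow>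
    x div int n = y div int n \<and> (monomer_atom n x, monomer_atom n y) \<in> E
    \<or> y = x + 1 \<and> y mod int n = 0"
proof
  assume "(x, y) \<in> polymer_edges n E"
  then consider (bond) k a b where "(a, b) \<in> E" "x = k * int n + int a" "y = k * int n + int b"
    | (link) k where "x = k * int n - 1" "y = k * int n"
    unfolding polymer_edges_def by blast
  then show "x div int n = y div int n \<and> (monomer_atom n x, monomer_atom n y) \<in> E
    \<or> y = x + 1 \<and> y mod int n = 0"
  proof cases
    case bond
    with assms(2) have "a < n" "b < n" by auto
    with bond show ?thesis by (simp add: monomer_atom_block)
  next
    case link
    then show ?thesis by simp
  qed
next
  assume "x div int n = y div int n \<and> (monomer_atom n x, monomer_atom n y) \<in> E
    \<or> y = x + 1 \<and> y mod int n = 0"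
  then show "(x, y) \<in> polymer_edges n E"
  proof
    assume "x div int n = y div int n \<and> (monomer_atom n x, monomer_atom n y) \<in> E"
    then have "(x, y) = (x div int n * int n + int (monomer_atom n x),
                         x div int n * int n + int (monomer_atom n y))
        \<and> (monomer_atom n x, monomer_atom n y) \<in> E"
      by (metis div_mult_add_monomer_atom[OF assms(1)])
    then show ?thesis
      unfolding polymer_edges_def by blast
  next
    assume "y = x + 1 \<and> y mod int n = 0"
    then have "(x, y) = (y div int n * int n - 1, y div int n * int n)"
      by (metis add_diff_cancel_right' add.right_neutral div_mult_mod_eq)
    then show ?thesis
      unfolding polymer_edges_def by blast
  qed
qed

lemma monomer_atom_eq_last_iff:
  assumes "0 < n"
  shows "monomer_atom n i = n - 1 \<longleftrightarrow> (i + 1) mod int n = 0"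
proof -
  have "(i + 1) mod int n = (i mod int n + 1) mod int n"
    by (simp add: mod_add_left_eq)
  moreover have "0 \<le> i mod int n" "i mod int n < int n"
    using assms by simp_all
  ultimately have "(i + 1) mod int n = 0 \<longleftrightarrow> i mod int n + 1 = int n"
    by (smt (verit) mod_pos_pos_trivial mod_self)
  then show ?thesis
    using assms by (simp add: monomer_atom_def nat_eq_iff of_nat_diff; linarith)
qed

lemma monomer_atom_eq_0_iff: "0 < n \<Longrightarrow> monomer_atom n i = 0 \<longleftrightarrow> i mod int n = 0"
  using Euclidean_Rings.pos_mod_sign[of "int n" i] by (simp add: monomer_atom_def; linarith)

lemma polymer_edges_Image:
  assumes "0 < n" and "E \<subseteq> {..<n} \<times> {..<n}"
  shows "polymer_edges n E `` {i} =
    (\<lambda>b. i div int n * int n + int b) ` (E `` {monomer_atom n i})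
    \<union> (if monomer_atom n i = n - 1 then {i + 1} else {})"
proof -
  have "i div int n = y div int n \<and> (monomer_atom n i, monomer_atom n y) \<in> E
      \<longleftrightarrow> y \<in> (\<lambda>b. i div int n * int n + int b) ` (E `` {monomer_atom n i})" for y
  proof
    assume "i div int n = y div int n \<and> (monomer_atom n i, monomer_atom n y) \<in> E"
    then show "y \<in> (\<lambda>b. i div int n * int n + int b) ` (E `` {monomer_atom n i})"
      using div_mult_add_monomer_atom[OF assms(1), of y]
      by (intro rev_image_eqI[of "monomer_atom n y"]) auto
  next
    assume "y \<in> (\<lambda>b. i div int n * int n + int b) ` (E `` {monomer_atom n i})"
    with assms(2) show "i div int n = y div int n \<and> (monomer_atom n i, monomer_atom n y) \<in> E"
      by (auto simp: monomer_atom_block)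
  qed
  note block = this
  have link: "y = i + 1 \<and> y mod int n = 0 \<longleftrightarrow> y \<in> (if monomer_atom n i = n - 1 then {i + 1} else {})"
    for y
    unfolding monomer_atom_eq_last_iff[OF assms(1)] by auto
  show ?thesis
    by (rule set_eqI) (simp only: Image_singleton_iff mem_polymer_edges_iff[OF assms] block link Un_iff)
qed

lemma polymer_edges_converse_Image:
  assumes "0 < n" and "E \<subseteq> {..<n} \<times> {..<n}"
  shows "(polymer_edges n E)\<inverse> `` {i} =
    (\<lambda>a. i div int n * int n + int a) ` (E\<inverse> `` {monomer_atom n i})
    \<union> (if monomer_atom n i = 0 then {i - 1} else {})"
proof -
  have "x div int n = i div int n \<and> (monomer_atom n x, monomer_atom n i) \<in> E
      \<longleftrightarrow> x \<in> (\<lambda>a. i div int n * int n + int a) ` (E\<inverse> `` {monomer_atom n i})" for x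
  proof
    assume "x div int n = i div int n \<and> (monomer_atom n x, monomer_atom n i) \<in> E"
    then show "x \<in> (\<lambda>a. i div int n * int n + int a) ` (E\<inverse> `` {monomer_atom n i})"
      using div_mult_add_monomer_atom[OF assms(1), of x]
      by (intro rev_image_eqI[of "monomer_atom n x"]) auto
  next
    assume "x \<in> (\<lambda>a. i div int n * int n + int a) ` (E\<inverse> `` {monomer_atom n i})"
    with assms(2) show "x div int n = i div int n \<and> (monomer_atom n x, monomer_atom n i) \<in> E"
      by (auto simp: monomer_atom_block)
  qed
  note block = this
  have link: "i = x + 1 \<and> i mod int n = 0 \<longleftrightarrow> x \<in> (if monomer_atom n i = 0 then {i - 1} else {})"
    for x
    unfolding monomer_atom_eq_0_iff[OF assms(1)] by auto
  show ?thesis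
    by (rule set_eqI)
      (simp only: Image_singleton_iff converse_iff mem_polymer_edges_iff[OF assms] block link Un_iff)
qed

lemma image_mset_monomer_atom_shift:
  assumes "R \<subseteq> {..<n}"
  shows "image_mset (monomer_atom n) (mset_set ((\<lambda>b. k * int n + int b) ` R)) = mset_set R"
proof -
  have "image_mset (monomer_atom n) (mset_set ((\<lambda>b. k * int n + int b) ` R))
      = image_mset (monomer_atom n \<circ> (\<lambda>b. k * int n + int b)) (mset_set R)"
    by (simp add: image_mset_mset_set[symmetric] inj_on_def multiset.map_comp)
  also have "\<dots> = image_mset id (mset_set R)"
    using assms finite_subset[OF assms] by (intro image_mset_cong) (auto simp: monomer_atom_block)
  finally show ?thesis
    by simp
qed

lemma image_mset_monomer_atom_polymer_out_nbrs:
  assumes "0 < n" and E: "E \<subseteq> {..<n} \<times> {..<n}"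
  shows "image_mset (monomer_atom n) (mset_set (polymer_edges n E `` {i}))
    = mset_set (E `` {monomer_atom n i}) + (if monomer_atom n i = n - 1 then {#0#} else {#})"
proof -
  define j k where "j = monomer_atom n i" and "k = i div int n"
  have sub: "E `` {j} \<subseteq> {..<n}"
    using E by blast
  then have fin: "finite (E `` {j})"
    using finite_nat_iff_bounded by blast
  have last: "monomer_atom n (i + 1) = 0" if "j = n - 1"
    using that monomer_atom_eq_last_iff[OF assms(1), of i]
      monomer_atom_eq_0_iff[OF assms(1), of "i + 1"]
    by (simp add: j_def)
  have disj: "(\<lambda>b. k * int n + int b) ` (E `` {j}) \<inter> (if j = n - 1 then {i + 1} else {}) = {}"
    using sub div_mult_add_monomer_atom[OF assms(1), of i] assms(1)
    by (auto simp: j_def k_def of_nat_diff)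
  have "image_mset (monomer_atom n) (mset_set (polymer_edges n E `` {i}))
      = image_mset (monomer_atom n) (mset_set ((\<lambda>b. k * int n + int b) ` (E `` {j})))
        + image_mset (monomer_atom n) (mset_set (if j = n - 1 then {i + 1} else {}))"
    unfolding polymer_edges_Image[OF assms] j_def[symmetric] k_def[symmetric]
    using fin disj by (simp add: mset_set_Union)
  also have "\<dots> = mset_set (E `` {j}) + (if j = n - 1 then {#0#} else {#})"
    using image_mset_monomer_atom_shift[OF sub] last by simp
  finally show ?thesis
    unfolding j_def .
qed

lemma image_mset_monomer_atom_polymer_in_nbrs:
  assumes "0 < n" and E: "E \<subseteq> {..<n} \<times> {..<n}"
  shows "image_mset (monomer_atom n) (mset_set ((polymer_edges n E)\<inverse> `` {i}))
    = mset_set (E\<inverse> `` {monomer_atom n i}) + (if monomer_atom n i = 0 then {#n - 1#} else {#})"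
proof -
  define j k where "j = monomer_atom n i" and "k = i div int n"
  have sub: "E\<inverse> `` {j} \<subseteq> {..<n}"
    using E by blast
  then have fin: "finite (E\<inverse> `` {j})"
    using finite_nat_iff_bounded by blast
  have first: "monomer_atom n (i - 1) = n - 1" if "j = 0"
    using that monomer_atom_eq_last_iff[OF assms(1), of "i - 1"]
      monomer_atom_eq_0_iff[OF assms(1), of i]
    by (simp add: j_def)
  have disj: "(\<lambda>a. k * int n + int a) ` (E\<inverse> `` {j}) \<inter> (if j = 0 then {i - 1} else {}) = {}"
    using div_mult_add_monomer_atom[OF assms(1), of i] by (auto simp: j_def k_def)
  have "image_mset (monomer_atom n) (mset_set ((polymer_edges n E)\<inverse> `` {i}))
      = image_mset (monomer_atom n) (mset_set ((\<lambda>a. k * int n + int a) ` (E\<inverse> `` {j})))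
        + image_mset (monomer_atom n) (mset_set (if j = 0 then {i - 1} else {}))"
    unfolding polymer_edges_converse_Image[OF assms] j_def[symmetric] k_def[symmetric]
    using fin disj by (simp add: mset_set_Union)
  also have "\<dots> = mset_set (E\<inverse> `` {j}) + (if j = 0 then {#n - 1#} else {#})"
    using image_mset_monomer_atom_shift[OF sub] first by simp
  finally show ?thesis
    unfolding j_def .
qed

lemma image_mset_monomer_atom_polymer_nbrs:
  assumes "0 < n" and E: "E \<subseteq> {..<n} \<times> {..<n}"
  shows "image_mset (monomer_atom n) (nbrs_set (polymer_edges n E) i)
    = nbrs_mset (star_edges n E) (monomer_atom n i)"
proof -
  have "finite E"
    using E finite_subset by blast
  then have "nbrs_mset (star_edges n E) j
      = mset_set (E `` {j}) + mset_set (E\<inverse> `` {j})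
        + (if 0 = j then {#n - 1#} else {#}) + (if n - 1 = j then {#0#} else {#})" for j
    unfolding star_edges_def nbrs_mset_add nbrs_mset_single
    by (simp add: nbrs_mset_mset_set nbrs_set_conv_Image)
  then show ?thesis
    by (simp add: nbrs_set_conv_Image image_mset_monomer_atom_polymer_out_nbrs[OF assms]
        image_mset_monomer_atom_polymer_in_nbrs[OF assms] ac_simps)
qed

theorem theorem1:
  fixes n :: nat and E :: "(nat \<times> nat) set" and X :: "nat \<Rightarrow> 'f::real_vector"
    and ls :: "('f, 'a) layer list"
  assumes "n \<ge> 1"
    and "E \<subseteq> {..<n} \<times> {..<n}"
  shows "polymer_output n E X ls = star_output n E X ls"
proof -
  have n: "0 < n"
    using assms(1) by simp
  have "run_layers (nbrs_set (polymer_edges n E)) ls (X \<circ> monomer_atom n)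
      = run_layers (nbrs_mset (star_edges n E)) ls X \<circ> monomer_atom n"
    by (rule run_layers_covering) (rule image_mset_monomer_atom_polymer_nbrs[OF n assms(2)])
  moreover have "(\<lambda>i. X (nat (i mod int n))) = X \<circ> monomer_atom n"
    by (simp add: comp_def monomer_atom_def)
  ultimately show ?thesis
    unfolding polymer_output_def star_output_def by (simp add: monomer_atom_of_nat)
qed

end
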